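(* Let $k$ be a non-archimedean local field of residue characteristic $2$. Let $B(x)=\Delta x^2$ on $k$, where $|\Delta|=|\varpi|$. Let $z=q^{-\beta}$, $w=zq^{-1}$, and $t\in\mathfrak o\setminus\{0\}$ with $|t|=q^{-T}$. If $|2|\ge|t^2|$, then \[ X^B(\beta;t^2)=|\varpi|^{\lfloor e/2\rfloor}\,\frac{1-(zw)^{T+1-\lceil e/2\rceil}}{1-zw} + z\,|\varpi|^{\lceil e/2\rceil}\,\frac{1-(zw)^{T-\lfloor e/2\rfloor}}{1-zw}, \] and $X^B(\beta;t^2)=0$ otherwise.
   Context: $k$ has ring of integers $\mathfrak o$, uniformizer $\varpi$, residue field of cardinality $q$, absolute value normalized by $|\varpi|=q^{-1}$, and $e=\operatorname{ord}(2)$ is the ramification index. On $\mathfrak o^n$ use the additive Haar measure of total mass $1$. For a quadratic form $B$ on $k^n$, $\rho\in\mathfrak o$ and integer $\ell\ge0$: $X_\ell^B(\rho)=\operatorname{meas}\{x\in\mathfrak o^n: B(x)-\rho\in 2\varpi^\ell\mathfrak o\}$ and $X^B(\beta;\rho)=\sum_{\ell\ge0}z^\ell X_\ell^B(\rho)$ with $z=q^{-\beta}$. *)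

theory Defs
  imports "HOL-Analysis.Analysis"
begin

definition vint :: "('a::field \<Rightarrow> real) \<Rightarrow> 'a set" where
  "vint av = {x. av x \<le> 1}"

definition residue_classes :: "('a::field \<Rightarrow> real) \<Rightarrow> 'a set set" where
  "residue_classes av = (\<lambda>x. {y \<in> vint av. av (x - y) < 1}) ` vint av"

definition nonarch_local_field :: "('a::field \<Rightarrow> real) \<Rightarrow> 'a \<Rightarrow> nat \<Rightarrow> bool" where
  "nonarch_local_field av w0 q \<longleftrightarrow>
     (\<forall>x. 0 \<le> av x) \<and> (\<forall>x. av x = 0 \<longleftrightarrow> x = 0) \<and>
     (\<forall>x y. av (x * y) = av x * av y) \<and>
     (\<forall>x y. av (x + y) \<le> max (av x) (av y)) \<and>
     1 < q \<and> w0 \<in> vint av \<and> av w0 = 1 / real q \<and>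
     (\<forall>x. x \<noteq> 0 \<longrightarrow> (\<exists>n::int. av x = real q powi n)) \<and>
     finite (residue_classes av) \<and> card (residue_classes av) = q \<and>
     (\<forall>f::nat \<Rightarrow> 'a. (\<forall>\<epsilon>>0. \<exists>N. \<forall>m\<ge>N. \<forall>n\<ge>N. av (f m - f n) < \<epsilon>) \<longrightarrow>
        (\<exists>L. \<forall>\<epsilon>>0. \<exists>N. \<forall>n\<ge>N. av (f n - L) < \<epsilon>))"

definition residue_char_2 :: "('a::field \<Rightarrow> real) \<Rightarrow> bool" where
  "residue_char_2 av \<longleftrightarrow> av 2 < 1"

definition ord :: "('a::field \<Rightarrow> real) \<Rightarrow> nat \<Rightarrow> 'a \<Rightarrow> int" where
  "ord av q x = (THE n::int. av x = real q powi (- n))"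

text \<open>Additive Haar measure of total mass 1 on the ring of integers, for closed
  subsets S: the infimum over m of (number of cosets of w0^m o meeting S) / q^m.\<close>
definition haar_o :: "('a::field \<Rightarrow> real) \<Rightarrow> nat \<Rightarrow> 'a set \<Rightarrow> real" where
  "haar_o av q S = (INF m::nat.
      real (card ((\<lambda>x. {y \<in> vint av. av (x - y) \<le> (1 / real q) ^ m}) ` S)) / real q ^ m)"

definition Xl :: "('a::field \<Rightarrow> real) \<Rightarrow> 'a \<Rightarrow> nat \<Rightarrow> 'a \<Rightarrow> 'a \<Rightarrow> nat \<Rightarrow> real" where
  "Xl av w0 q Delta rho l = haar_o av q
     {x \<in> vint av. \<exists>y \<in> vint av. Delta * x ^ 2 - rho = 2 * w0 ^ l * y}"

definition XB :: "('a::field \<Rightarrow> real) \<Rightarrow> 'a \<Rightarrow> nat \<Rightarrow> 'a \<Rightarrow> complex \<Rightarrow> 'a \<Rightarrow> complex" where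
  "XB av w0 q Delta beta rho =
     (\<Sum>l. ((of_nat q :: complex) powr (- beta)) ^ l * complex_of_real (Xl av w0 q Delta rho l))"

end

(*
  Write av 2 = q^-e. The congruence Delta x^2 = t^2 mod 2 w0^l o says that
  av (Delta x^2 - t^2) <= q^-(e+l). Since av (Delta x^2) is an odd and av (t^2) = q^-2T an even
  power of q^-1, av (Delta x^2 - t^2) is the larger of the two; so the solutions form the empty
  set if e + l > 2T and the ball w0^floor((e+l)/2) o otherwise. That ball has Haar measure
  q^-floor((e+l)/2), because each coset of w0^m o splits into exactly q cosets of w0^(m+1) o,
  one per residue class. Hence X^B is the finite sum of f l = z^l q^-floor((e+l)/2) over
  l <= 2T - e, and f (l + 2) = zw f l: its even- and odd-indexed terms are two geometric
  series with ratio zw.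
*)

theory Submission
  imports Defs
begin

section \<open>Non-archimedean absolute values\<close>

locale local_field =
  fixes av :: "'a::field \<Rightarrow> real" and w0 :: 'a and q :: nat
  assumes local_field: "nonarch_local_field av w0 q"
begin

abbreviation r :: real where "r \<equiv> 1 / real q"

lemma av_nonneg: "0 \<le> av x"
  using local_field by (simp add: nonarch_local_field_def)

lemma av_eq_0_iff [simp]: "av x = 0 \<longleftrightarrow> x = 0"
  using local_field by (simp add: nonarch_local_field_def)

lemma av_mult: "av (x * y) = av x * av y"
  using local_field by (simp add: nonarch_local_field_def)

lemma av_add_le: "av (x + y) \<le> max (av x) (av y)"
  using local_field by (simp add: nonarch_local_field_def)

lemma q_gt_1: "1 < q"
  using local_field by (simp add: nonarch_local_field_def)

lemma av_w0 [simp]: "av w0 = r"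
  using local_field by (simp add: nonarch_local_field_def)

lemma av_power_int: "x \<noteq> 0 \<Longrightarrow> \<exists>n::int. av x = real q powi n"
  using local_field by (simp add: nonarch_local_field_def)

lemma card_residue_classes: "card (residue_classes av) = q"
  using local_field by (simp add: nonarch_local_field_def)

lemma r_pos: "0 < r"
  using q_gt_1 by simp

lemma r_less_1: "r < 1"
  using q_gt_1 by simp

lemma power_r_pos: "0 < r ^ m"
  using r_pos by simp

lemma power_r_le_1: "r ^ m \<le> 1"
  using r_pos r_less_1 by (simp add: power_le_one)

lemma power_r_le_iff: "r ^ m \<le> r ^ n \<longleftrightarrow> n \<le> m"
  using r_pos r_less_1 by simp

lemma power_r_less_iff: "r ^ m < r ^ n \<longleftrightarrow> n < m"
  using r_pos r_less_1 by simp

lemma av_0 [simp]: "av 0 = 0"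
  by simp

lemma av_1 [simp]: "av 1 = 1"
proof -
  have "av 1 * 1 = av 1 * av 1"
    using av_mult[of 1 1] by simp
  then show ?thesis
    using av_eq_0_iff[of 1] by (metis mult_left_cancel one_neq_zero)
qed

lemma av_minus [simp]: "av (- x) = av x"
proof -
  have "av (-1) ^ 2 = 1"
    using av_mult[of "-1" "-1"] by (simp add: power2_eq_square)
  then have "av (-1) = 1"
    using av_nonneg[of "-1"] by (auto simp: power2_eq_1_iff)
  moreover have "av (- x) = av (-1) * av x"
    by (metis av_mult mult_minus1)
  ultimately show ?thesis
    by simp
qed

lemma av_diff_commute: "av (x - y) = av (y - x)"
  using av_minus[of "y - x"] by simp

lemma av_power: "av (x ^ n) = av x ^ n"
  by (induction n) (simp_all add: av_mult)

lemma av_divide: "av (x / y) = av x / av y"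
proof (cases "y = 0")
  case False
  then show ?thesis
    using av_mult[of "x / y" y] by (simp add: eq_divide_eq)
qed simp

lemma av_diff_le: "av (x - y) \<le> max (av x) (av y)"
  using av_add_le[of x "- y"] by simp

lemma av_diff_trans: "av (x - z) \<le> max (av (x - y)) (av (y - z))"
  using av_add_le[of "x - y" "y - z"] by simp

lemma av_add_eq_left: assumes "av y < av x" shows "av (x + y) = av x"
proof -
  have "av x \<le> max (av (x + y)) (av y)"
    using av_diff_le[of "x + y" y] by simp
  with assms av_add_le[of x y] show ?thesis
    by linarith
qed

lemma av_diff_eq_max: assumes "av x \<noteq> av y" shows "av (x - y) = max (av x) (av y)"
proof (cases "av y < av x")
  case True
  then show ?thesis
    using av_add_eq_left[of "- y" x] by simp
next
  case False
  with assms have "av x < av y" by simp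
  then show ?thesis
    using av_add_eq_left[of x "- y"] by (simp add: add.commute)
qed

lemma av_2_le_1: "av 2 \<le> 1"
  using av_add_le[of 1 1] by (metis av_1 max.idem one_add_one)

lemma mem_vint_iff: "x \<in> vint av \<longleftrightarrow> av x \<le> 1"
  unfolding vint_def by simp

lemma vint_add: "x \<in> vint av \<Longrightarrow> y \<in> vint av \<Longrightarrow> x + y \<in> vint av"
  using av_add_le[of x y] by (simp add: mem_vint_iff)

lemma vint_mult: "x \<in> vint av \<Longrightarrow> y \<in> vint av \<Longrightarrow> x * y \<in> vint av"
  by (simp add: mem_vint_iff av_mult av_nonneg mult_le_one)

lemma av_w0_power: "av (w0 ^ m) = r ^ m"
  by (simp add: av_power)

lemma w0_power_in_vint: "w0 ^ m \<in> vint av"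
  by (simp add: mem_vint_iff av_w0_power power_r_le_1)

lemma w0_power_nonzero: "w0 ^ m \<noteq> 0"
  using av_w0_power[of m] power_r_pos[of m] by (metis av_eq_0_iff less_irrefl)

lemma vint_av_eq_power_r:
  assumes "x \<noteq> 0" "av x \<le> 1" obtains n where "av x = r ^ n"
proof -
  obtain k :: int where k: "av x = real q powi k"
    using av_power_int assms(1) by blast
  have "k \<le> 0"
  proof (rule ccontr)
    assume "\<not> k \<le> 0"
    then have "real q powi 0 < real q powi k"
      using q_gt_1 by (intro power_int_strict_increasing) auto
    with k assms(2) show False by simp
  qed
  then obtain n :: nat where "k = - int n"
    by (rule nonpos_int_cases)
  with k have "av x = r ^ n"
    by (simp add: power_int_minus power_one_over inverse_eq_divide)
  then show ?thesis ..
qed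

lemma av_less_power_r_imp_le: assumes "av x < r ^ m" shows "av x \<le> r ^ Suc m"
proof (cases "x = 0")
  case False
  obtain n where n: "av x = r ^ n"
    using vint_av_eq_power_r[OF False] assms power_r_le_1[of m] by fastforce
  with assms show ?thesis
    unfolding n power_r_le_iff power_r_less_iff by simp
qed simp

lemma ord_eq: assumes "av x = r ^ e" shows "ord av q x = int e"
  unfolding ord_def
proof (rule the_equality)
  show "av x = real q powi (- int e)"
    using assms by (simp add: power_int_minus power_one_over inverse_eq_divide)
  have "strict_mono (\<lambda>n::int. real q powi n)"
    using q_gt_1 by (intro strict_monoI power_int_strict_increasing) auto
  moreover have "real q powi n = real q powi int e" if "av x = real q powi (- n)" for n
    using that assms by (simp add: power_int_minus power_one_over inverse_eq_divide)
  ultimately show "n = int e" if "av x = real q powi (- n)" for n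
    using that strict_mono_eq by metis
qed

lemma vint_dvd_iff:
  assumes "M \<noteq> 0" shows "(\<exists>y \<in> vint av. a = M * y) \<longleftrightarrow> av a \<le> av M"
proof
  assume "\<exists>y \<in> vint av. a = M * y"
  then show "av a \<le> av M"
    by (auto simp: mem_vint_iff av_mult av_nonneg mult_left_le)
next
  assume "av a \<le> av M"
  moreover have "0 < av M"
    using assms av_nonneg[of M] by (simp add: less_le)
  ultimately have "a / M \<in> vint av" and "a = M * (a / M)"
    using assms by (simp_all add: mem_vint_iff av_divide)
  then show "\<exists>y \<in> vint av. a = M * y" ..
qed

section \<open>Cosets of powers of the uniformizer and their Haar measure\<close>

definition coset :: "nat \<Rightarrow> 'a \<Rightarrow> 'a set" where
  "coset m x = {y \<in> vint av. av (x - y) \<le> r ^ m}"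

definition residue :: "'a \<Rightarrow> 'a set" where
  "residue x = {y \<in> vint av. av (x - y) < 1}"

lemma haar_o_eq: "haar_o av q S = (INF m. real (card (coset m ` S)) / real q ^ m)"
  unfolding haar_o_def coset_def ..

lemma residue_classes_eq: "residue_classes av = residue ` vint av"
  unfolding residue_classes_def residue_def ..

lemma av_diff_le_trans: "av (x - y) \<le> c \<Longrightarrow> av (y - z) \<le> c \<Longrightarrow> av (x - z) \<le> c"
  using av_diff_trans[of x z y] by simp

lemma av_diff_less_trans: "av (x - y) < c \<Longrightarrow> av (y - z) < c \<Longrightarrow> av (x - z) < c"
  using av_diff_trans[of x z y] by simp

lemma coset_subset_vint: "coset m x \<subseteq> vint av"
  unfolding coset_def by auto

lemma mem_coset_self: "x \<in> vint av \<Longrightarrow> x \<in> coset m x"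
  unfolding coset_def using power_r_pos[of m] by simp

lemma coset_eq_iff:
  assumes "x \<in> vint av" "y \<in> vint av"
  shows "coset m x = coset m y \<longleftrightarrow> av (x - y) \<le> r ^ m"
proof
  assume "coset m x = coset m y"
  then have "y \<in> coset m x"
    using mem_coset_self[OF assms(2)] by simp
  then show "av (x - y) \<le> r ^ m"
    unfolding coset_def by simp
next
  assume xy: "av (x - y) \<le> r ^ m"
  then have yx: "av (y - x) \<le> r ^ m"
    by (simp add: av_diff_commute)
  show "coset m x = coset m y"
    unfolding coset_def using av_diff_le_trans[OF xy] av_diff_le_trans[OF yx] by blast
qed

lemma coset_eq: "x \<in> vint av \<Longrightarrow> y \<in> coset m x \<Longrightarrow> coset m y = coset m x"
  using coset_eq_iff[of y x m] av_diff_commute[of x y] unfolding coset_def by simp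

lemma coset_subset_coset:
  assumes "k \<le> m" "x \<in> coset k c" shows "coset m x \<subseteq> coset k c"
proof
  fix y assume y: "y \<in> coset m x"
  have "r ^ m \<le> r ^ k"
    using assms(1) by (simp add: power_r_le_iff)
  with y have xy: "av (x - y) \<le> r ^ k"
    unfolding coset_def by simp
  have "av (c - x) \<le> r ^ k"
    using assms(2) unfolding coset_def by simp
  then have "av (c - y) \<le> r ^ k"
    using xy by (rule av_diff_le_trans)
  with y show "y \<in> coset k c"
    unfolding coset_def by simp
qed

lemma add_w0_power_mem_coset:
  assumes "x \<in> vint av" "a \<in> vint av" shows "x + w0 ^ m * a \<in> coset m x"
proof -
  have "av (w0 ^ m * a) \<le> r ^ m"
    using assms(2) power_r_pos[of m] by (simp add: mem_vint_iff av_mult av_w0_power mult_left_le)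
  moreover have "x + w0 ^ m * a \<in> vint av"
    using assms by (simp add: vint_add vint_mult w0_power_in_vint)
  ultimately show ?thesis
    unfolding coset_def by simp
qed

lemma residue_eq: assumes "av (x - y) < 1" shows "residue x = residue y"
proof -
  have "av (y - x) < 1"
    using assms by (simp add: av_diff_commute)
  then have "av (y - z) < 1" if "av (x - z) < 1" for z
    using that by (rule av_diff_less_trans)
  moreover have "av (x - z) < 1" if "av (y - z) < 1" for z
    using assms that by (rule av_diff_less_trans)
  ultimately show ?thesis
    unfolding residue_def by (auto simp only: mem_Collect_eq)
qed

definition center :: "nat \<Rightarrow> 'a set \<Rightarrow> 'a" where
  "center m D = (SOME c. c \<in> vint av \<and> coset m c = D)"

definition rep :: "'a set \<Rightarrow> 'a" where
  "rep C = (SOME a. a \<in> vint av \<and> residue a = C)"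

lemma center:
  assumes "D \<in> coset m ` vint av" shows "center m D \<in> vint av" "coset m (center m D) = D"
proof -
  have "\<exists>c. c \<in> vint av \<and> coset m c = D"
    using assms by auto
  then have "center m D \<in> vint av \<and> coset m (center m D) = D"
    unfolding center_def by (rule someI_ex)
  then show "center m D \<in> vint av" "coset m (center m D) = D"
    by auto
qed

lemma rep:
  assumes "C \<in> residue_classes av" shows "rep C \<in> vint av" "residue (rep C) = C"
proof -
  have "\<exists>a. a \<in> vint av \<and> residue a = C"
    using assms residue_classes_eq by auto
  then have "rep C \<in> vint av \<and> residue (rep C) = C"
    unfolding rep_def by (rule someI_ex)
  then show "rep C \<in> vint av" "residue (rep C) = C"
    by auto
qed

lemma coset_image_coarser:
  assumes "m \<le> k" "c \<in> vint av" shows "coset m ` coset k c = {coset m c}"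
proof -
  have "coset m x = coset m c" if "x \<in> coset k c" for x
    using assms coset_subset_coset[OF assms(1)] mem_coset_self[OF assms(2)] that
    by (intro coset_eq) auto
  then show ?thesis
    using mem_coset_self[OF assms(2)] by blast
qed

lemma center_mem_coset:
  assumes "k \<le> m" "D \<in> coset m ` coset k c" shows "center m D \<in> coset k c"
proof -
  obtain x where x: "x \<in> coset k c" "D = coset m x"
    using assms(2) by blast
  then have "D \<in> coset m ` vint av"
    using coset_subset_vint by blast
  then have "center m D \<in> D"
    using center mem_coset_self by metis
  then show ?thesis
    using x coset_subset_coset[OF assms(1)] by blast
qed

text \<open>A coset of level m splits into the q cosets of level m+1 of the points
  center + w0^m a, where a runs over representatives of the residue classes.\<close>
definition refine :: "nat \<Rightarrow> 'a set \<times> 'a set \<Rightarrow> 'a set" where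
  "refine m DC = coset (Suc m) (center m (fst DC) + w0 ^ m * rep (snd DC))"

lemma refine_mem:
  assumes "k \<le> m" "D \<in> coset m ` coset k c" "C \<in> residue_classes av"
  shows "refine m (D, C) \<in> coset (Suc m) ` coset k c"
proof -
  let ?d = "center m D"
  have d: "?d \<in> coset k c" "?d \<in> vint av"
    using center_mem_coset[OF assms(1,2)] coset_subset_vint by auto
  have "?d + w0 ^ m * rep C \<in> coset m ?d"
    using add_w0_power_mem_coset d(2) rep(1)[OF assms(3)] by blast
  then have "?d + w0 ^ m * rep C \<in> coset k c"
    using coset_subset_coset[OF assms(1) d(1)] by blast
  then show ?thesis
    unfolding refine_def by simp
qed

lemma coset_Suc_digit:
  assumes "x \<in> vint av" "d \<in> vint av" "av (x - d) \<le> r ^ m"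
  obtains C where "C \<in> residue_classes av" "coset (Suc m) x = coset (Suc m) (d + w0 ^ m * rep C)"
proof -
  define u where "u = (x - d) / w0 ^ m"
  have xu: "x - d = w0 ^ m * u"
    unfolding u_def using w0_power_nonzero by simp
  have u: "u \<in> vint av"
    using assms(3) power_r_pos[of m] by (simp add: u_def mem_vint_iff av_divide av_w0_power)
  define C where "C = residue u"
  have C: "C \<in> residue_classes av"
    unfolding C_def residue_classes_eq using u by blast
  have a: "rep C \<in> vint av" "u \<in> residue (rep C)"
    using rep[OF C] u unfolding C_def residue_def by auto
  then have au: "av (rep C - u) \<le> r"
    using av_less_power_r_imp_le[of "rep C - u" 0] unfolding residue_def by simp
  have "x - (d + w0 ^ m * rep C) = w0 ^ m * (u - rep C)"
    using xu by (simp add: algebra_simps)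
  then have "av (x - (d + w0 ^ m * rep C)) = r ^ m * av (rep C - u)"
    by (simp add: av_mult av_w0_power av_diff_commute[of u])
  also have "\<dots> \<le> r ^ m * r"
    using au power_r_pos[of m] by (intro mult_left_mono) auto
  finally have "av (x - (d + w0 ^ m * rep C)) \<le> r ^ Suc m"
    by (simp only: power_Suc2)
  then have "coset (Suc m) x = coset (Suc m) (d + w0 ^ m * rep C)"
    using coset_eq_iff assms(1,2) a(1) by (simp add: vint_add vint_mult w0_power_in_vint)
  with C show ?thesis
    by (rule that)
qed

lemma digits_unique:
  assumes vint: "d \<in> vint av" "d' \<in> vint av" "a \<in> vint av" "a' \<in> vint av"
    and close: "av ((d + w0 ^ m * a) - (d' + w0 ^ m * a')) \<le> r ^ Suc m"
  shows "av (d - d') \<le> r ^ m" and "d = d' \<Longrightarrow> residue a = residue a'"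
proof -
  have close': "av ((d - d') + w0 ^ m * (a - a')) \<le> r ^ Suc m"
    using close by (simp add: algebra_simps)
  have "av (a - a') \<le> 1"
    using av_diff_le[of a a'] vint(3,4) by (simp add: mem_vint_iff)
  then have small: "av (w0 ^ m * (a - a')) \<le> r ^ m"
    using power_r_pos[of m] by (simp add: av_mult av_w0_power mult_left_le)
  have "r ^ Suc m < r ^ m"
    by (simp only: power_r_less_iff)
  then show "av (d - d') \<le> r ^ m"
    using close' small av_add_eq_left[of "w0 ^ m * (a - a')" "d - d'"] by force
  assume "d = d'"
  with close' have "r ^ m * av (a - a') \<le> r ^ m * r"
    by (simp add: av_mult av_w0_power power_Suc2)
  then have "av (a - a') \<le> r"
    using power_r_pos[of m] mult_le_cancel_left_pos by blast
  with r_less_1 show "residue a = residue a'"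
    by (intro residue_eq) simp
qed

lemma refine_surj:
  assumes "k \<le> m" "x \<in> coset k c"
  shows "coset (Suc m) x \<in> refine m ` (coset m ` coset k c \<times> residue_classes av)"
proof -
  have x: "x \<in> vint av"
    using assms(2) coset_subset_vint by blast
  define D where "D = coset m x"
  have D: "D \<in> coset m ` coset k c" "D \<in> coset m ` vint av"
    unfolding D_def using assms(2) x by auto
  have "center m D \<in> vint av" "av (x - center m D) \<le> r ^ m"
    using center[OF D(2)] coset_eq_iff[OF x] unfolding D_def by auto
  then obtain C where "C \<in> residue_classes av" "coset (Suc m) x = refine m (D, C)"
    using coset_Suc_digit[OF x] unfolding refine_def by auto
  then show ?thesis
    using D(1) by blast
qed

lemma refine_inj: "inj_on (refine m) (coset m ` vint av \<times> residue_classes av)"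
proof (rule inj_onI)
  fix P P'
  assume P: "P \<in> coset m ` vint av \<times> residue_classes av"
    and P': "P' \<in> coset m ` vint av \<times> residue_classes av"
    and eq: "refine m P = refine m P'"
  obtain D C D' C' where PP: "P = (D, C)" "P' = (D', C')"
    by fastforce
  have D: "D \<in> coset m ` vint av" and C: "C \<in> residue_classes av"
    and D': "D' \<in> coset m ` vint av" and C': "C' \<in> residue_classes av"
    using P P' unfolding PP by auto
  have vint: "center m D \<in> vint av" "center m D' \<in> vint av" "rep C \<in> vint av" "rep C' \<in> vint av"
    using center D D' rep C C' by auto
  have close: "av ((center m D + w0 ^ m * rep C) - (center m D' + w0 ^ m * rep C')) \<le> r ^ Suc m"
    using eq coset_eq_iff vint unfolding PP refine_def by (simp add: vint_add vint_mult w0_power_in_vint)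
  have "D = D'"
    using digits_unique(1)[OF vint close] coset_eq_iff[OF vint(1,2)] center(2) D D' by metis
  moreover have "C = C'"
    using digits_unique(2)[OF vint close] \<open>D = D'\<close> rep(2) C C' by metis
  ultimately show "P = P'"
    unfolding PP by simp
qed

lemma bij_betw_refine:
  assumes "k \<le> m"
  shows "bij_betw (refine m) (coset m ` coset k c \<times> residue_classes av) (coset (Suc m) ` coset k c)"
proof (rule bij_betw_imageI)
  have "coset m ` coset k c \<times> residue_classes av \<subseteq> coset m ` vint av \<times> residue_classes av"
    using coset_subset_vint by blast
  then show "inj_on (refine m) (coset m ` coset k c \<times> residue_classes av)"
    using refine_inj inj_on_subset by blast
  show "refine m ` (coset m ` coset k c \<times> residue_classes av) = coset (Suc m) ` coset k c"
    using refine_mem[OF assms] refine_surj[OF assms] by blast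
qed

lemma card_coset_image:
  assumes "c \<in> vint av" shows "card (coset (k + j) ` coset k c) = q ^ j"
proof (induction j)
  case 0
  then show ?case
    using coset_image_coarser[OF order_refl assms] by simp
next
  case (Suc j)
  have "card (coset (Suc (k + j)) ` coset k c) = card (coset (k + j) ` coset k c \<times> residue_classes av)"
    using bij_betw_same_card[OF bij_betw_refine] by simp
  also have "\<dots> = q ^ Suc j"
    using Suc card_residue_classes by (simp add: card_cartesian_product)
  finally show ?case
    by simp
qed

lemma haar_coset: assumes "c \<in> vint av" shows "haar_o av q (coset k c) = r ^ k"
proof -
  define F where "F m = real (card (coset m ` coset k c)) / real q ^ m" for m
  have F_ge: "r ^ k \<le> F m" for m
  proof (cases "m \<le> k")
    case True
    then have "F m = r ^ m"
      unfolding F_def coset_image_coarser[OF True assms] by (simp add: power_one_over)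
    with True show ?thesis
      by (simp add: power_r_le_iff)
  next
    case False
    then obtain j where m: "m = k + j"
      using le_Suc_ex nat_le_linear by blast
    have "real q ^ j / real q ^ m = r ^ k"
      using q_gt_1 unfolding m by (simp add: power_add power_one_over)
    then show ?thesis
      unfolding F_def m card_coset_image[OF assms] by simp
  qed
  have "F k = r ^ k"
    unfolding F_def coset_image_coarser[OF order_refl assms] by (simp add: power_one_over)
  then have "r ^ k \<in> range F"
    by (metis rangeI)
  then have "Inf (range F) = r ^ k"
    using F_ge by (intro cInf_eq_minimum) auto
  then show ?thesis
    unfolding haar_o_eq F_def by simp
qed

lemma haar_o_empty: "haar_o av q {} = 0"
  unfolding haar_o_def by simp

end

section \<open>Sums of sequences with a two-step geometric recurrence\<close>

lemma two_step_recurrence: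
  fixes f :: "nat \<Rightarrow> 'b::comm_ring_1"
  assumes "\<And>l. f (l + 2) = X * f l"
  shows "f l = X ^ (l div 2) * f (l mod 2)"
proof -
  have "f (2 * k + i) = X ^ k * f i" for k i
  proof (induction k)
    case (Suc k)
    have "f (2 * Suc k + i) = X * f (2 * k + i)"
      using assms[of "2 * k + i"] by (simp add: algebra_simps)
    with Suc show ?case
      by simp
  qed simp
  then show ?thesis
    by (metis div_mult_mod_eq mult.commute)
qed

lemma sum_two_step_recurrence:
  fixes f :: "nat \<Rightarrow> 'b::field"
  assumes rec: "\<And>l. f (l + 2) = X * f l" and "X \<noteq> 1"
  shows "(\<Sum>l<n. f l) = f 0 * (1 - X ^ ((n + 1) div 2)) / (1 - X) + f 1 * (1 - X ^ (n div 2)) / (1 - X)"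
proof -
  have "(\<Sum>l<n. f l) * (1 - X) = f 0 * (1 - X ^ ((n + 1) div 2)) + f 1 * (1 - X ^ (n div 2))"
  proof (induction n)
    case (Suc n)
    have fn: "f n = X ^ (n div 2) * f (n mod 2)"
      using rec by (rule two_step_recurrence)
    show ?case
    proof (cases "even n")
      case True
      then have "(n + 2) div 2 = Suc (n div 2)" "Suc n div 2 = n div 2"
        by auto
      with True Suc.IH show ?thesis
        by (simp add: fn algebra_simps)
    next
      case False
      then have "(n + 2) div 2 = Suc n div 2" "Suc n div 2 = Suc (n div 2)"
        by auto
      with False Suc.IH show ?thesis
        by (simp add: fn algebra_simps odd_iff_mod_2_eq_one)
    qed
  qed simp
  moreover have "1 - X \<noteq> 0"
    using assms(2) by simp
  ultimately show ?thesis
    by (simp add: add_divide_distrib[symmetric] eq_divide_eq)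
qed

lemma sum_power_half_exponent:
  fixes z X :: "'b::real_field" and \<rho> :: real
  assumes "e \<le> 2 * T" "X = z * z * of_real \<rho>" "X \<noteq> 1"
  shows "(\<Sum>l<2 * T - e + 1. z ^ l * of_real (\<rho> ^ ((e + l) div 2))) =
    of_real (\<rho> powi \<lfloor>real e / 2\<rfloor>) * (1 - X powi (int T + 1 - \<lceil>real e / 2\<rceil>)) / (1 - X)
    + z * of_real (\<rho> powi \<lceil>real e / 2\<rceil>) * (1 - X powi (int T - \<lfloor>real e / 2\<rfloor>)) / (1 - X)"
proof -
  define f where "f l = z ^ l * of_real (\<rho> ^ ((e + l) div 2))" for l
  have "(e + (l + 2)) div 2 = Suc ((e + l) div 2)" for l
    by simp
  then have rec: "f (l + 2) = X * f l" for l
    unfolding f_def assms(2) by (simp add: power_add algebra_simps)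
  have floor: "\<lfloor>real e / 2\<rfloor> = int (e div 2)" and ceiling: "\<lceil>real e / 2\<rceil> = int ((e + 1) div 2)"
    by linarith+
  have "int T + 1 - \<lceil>real e / 2\<rceil> = int ((2 * T - e + 1 + 1) div 2)"
    "int T - \<lfloor>real e / 2\<rfloor> = int ((2 * T - e + 1) div 2)"
    unfolding floor ceiling using assms(1) by presburger+
  then have "X powi (int T + 1 - \<lceil>real e / 2\<rceil>) = X ^ ((2 * T - e + 1 + 1) div 2)"
    "X powi (int T - \<lfloor>real e / 2\<rfloor>) = X ^ ((2 * T - e + 1) div 2)"
    by (simp_all only: power_int_of_nat)
  moreover have "\<rho> powi \<lfloor>real e / 2\<rfloor> = \<rho> ^ (e div 2)"
    "\<rho> powi \<lceil>real e / 2\<rceil> = \<rho> ^ ((e + 1) div 2)"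
    unfolding floor ceiling by (simp_all only: power_int_of_nat)
  moreover have "f 0 = of_real (\<rho> ^ (e div 2))" "f 1 = z * of_real (\<rho> ^ ((e + 1) div 2))"
    unfolding f_def by simp_all
  moreover have "(\<Sum>l<2 * T - e + 1. f l) =
    f 0 * (1 - X ^ ((2 * T - e + 1 + 1) div 2)) / (1 - X) + f 1 * (1 - X ^ ((2 * T - e + 1) div 2)) / (1 - X)"
    using rec assms(3) by (rule sum_two_step_recurrence)
  ultimately show ?thesis
    unfolding f_def by (simp only:)
qed

lemma norm_powr_square_div_less_1:
  assumes "1 < q" "0 < Re beta" "z = (of_nat q :: complex) powr - beta"
  shows "norm (z * z * of_real (1 / real q)) < 1"
proof -
  have "norm z = real q powr (- Re beta)"
    using assms(1,3) by (simp add: norm_powr_real_powr)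
  also have "\<dots> < 1"
    using assms(1,2) by (intro powr_less_one) auto
  finally have "norm z * norm z \<le> 1"
    by (simp add: mult_le_one)
  then have "norm (z * z * of_real (1 / real q)) \<le> 1 / real q"
    by (simp add: norm_mult norm_divide divide_right_mono)
  also have "\<dots> < 1"
    using assms(1) by simp
  finally show ?thesis .
qed

section \<open>The local densities of Delta x^2 at t^2\<close>

context local_field
begin

lemma av_Delta_square:
  assumes "av Delta = r" "av x = r ^ v" shows "av (Delta * x ^ 2) = r ^ (2 * v + 1)"
  using assms by (simp add: av_mult av_power power_mult power_add mult.commute)

lemma av_Delta_square_le_iff:
  assumes "av Delta = r" "x \<in> vint av"
  shows "av (Delta * x ^ 2) \<le> r ^ N \<longleftrightarrow> av x \<le> r ^ (N div 2)"
proof (cases "x = 0")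
  case False
  then obtain v where v: "av x = r ^ v"
    using vint_av_eq_power_r assms(2) by (auto simp: mem_vint_iff)
  have "N \<le> 2 * v + 1 \<longleftrightarrow> N div 2 \<le> v"
    by auto
  then show ?thesis
    unfolding av_Delta_square[OF assms(1) v] v power_r_le_iff .
qed (simp add: less_imp_le power_r_pos)

lemma av_Delta_square_neq:
  assumes "av Delta = r" "x \<in> vint av" shows "av (Delta * x ^ 2) \<noteq> r ^ (2 * T)"
proof (cases "x = 0")
  case False
  then obtain v where v: "av x = r ^ v"
    using vint_av_eq_power_r assms(2) by (auto simp: mem_vint_iff)
  have "2 * v + 1 \<noteq> 2 * T"
    by presburger
  then show ?thesis
    unfolding av_Delta_square[OF assms(1) v] using power_r_le_iff by (metis order_antisym order_refl)
next
  case True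
  then have "av (Delta * x ^ 2) = 0"
    by simp
  with power_r_pos[of "2 * T"] show ?thesis
    by linarith
qed

context
  fixes Delta t :: 'a and T :: nat
  assumes Delta: "av Delta = r" and t: "av t = r ^ T"
begin

lemma av_t_square: "av (t ^ 2) = r ^ (2 * T)"
  using t by (simp add: av_power power_mult mult.commute)

lemma av_Delta_square_diff:
  assumes "x \<in> vint av"
  shows "av (Delta * x ^ 2 - t ^ 2) = max (av (Delta * x ^ 2)) (r ^ (2 * T))"
  using av_diff_eq_max av_Delta_square_neq[OF Delta assms] av_t_square by metis

lemma square_solutions_eq_coset:
  assumes "M \<noteq> 0" "av M = r ^ N"
  shows "{x \<in> vint av. \<exists>y \<in> vint av. Delta * x ^ 2 - t ^ 2 = M * y}
       = (if N \<le> 2 * T then coset (N div 2) 0 else {})"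
proof -
  have "(\<exists>y \<in> vint av. Delta * x ^ 2 - t ^ 2 = M * y) \<longleftrightarrow> N \<le> 2 * T \<and> av x \<le> r ^ (N div 2)"
    if "x \<in> vint av" for x
    unfolding vint_dvd_iff[OF assms(1)] assms(2) av_Delta_square_diff[OF that]
      av_Delta_square_le_iff[OF Delta that, symmetric] by (auto simp: power_r_le_iff)
  then show ?thesis
    unfolding coset_def by auto
qed

lemma Xl_square:
  assumes "av 2 = r ^ e"
  shows "Xl av w0 q Delta (t ^ 2) l = (if e + l \<le> 2 * T then r ^ ((e + l) div 2) else 0)"
proof -
  have av_M: "av (2 * w0 ^ l) = r ^ (e + l)"
    using assms by (simp add: av_mult av_w0_power power_add)
  then have "2 * w0 ^ l \<noteq> 0"
    using power_r_pos[of "e + l"] by (metis av_eq_0_iff less_irrefl)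
  from square_solutions_eq_coset[OF this av_M] show ?thesis
    unfolding Xl_def
    by (simp add: haar_coset mem_vint_iff haar_o_empty)
qed

text \<open>If k has characteristic 2, the modulus 2 w0^l is 0 and the congruence is an equation.\<close>

lemma Xl_square_char_2:
  assumes "(2 :: 'a) = 0" shows "Xl av w0 q Delta (t ^ 2) l = 0"
proof -
  have "Delta * x ^ 2 \<noteq> t ^ 2" if "x \<in> vint av" for x
    using av_Delta_square_neq[OF Delta that] av_t_square by metis
  then have no_solutions:
    "{x \<in> vint av. \<exists>y \<in> vint av. Delta * x ^ 2 - t ^ 2 = 2 * w0 ^ l * y} = {}"
    using assms by auto
  show ?thesis
    unfolding Xl_def no_solutions by (rule haar_o_empty)
qed

lemma XB_square:
  assumes "av 2 = r ^ e" "e \<le> 2 * T"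
  shows "XB av w0 q Delta beta (t ^ 2) =
    (\<Sum>l<2 * T - e + 1. (of_nat q powr - beta) ^ l * of_real (r ^ ((e + l) div 2)))"
proof -
  let ?z = "(of_nat q :: complex) powr - beta"
  have "XB av w0 q Delta beta (t ^ 2) =
    (\<Sum>l<2 * T - e + 1. ?z ^ l * of_real (Xl av w0 q Delta (t ^ 2) l))"
    unfolding XB_def Xl_square[OF assms(1)]
    by (rule suminf_finite) (use assms(2) in auto)
  also have "\<dots> = (\<Sum>l<2 * T - e + 1. ?z ^ l * of_real (r ^ ((e + l) div 2)))"
    unfolding Xl_square[OF assms(1)] by (rule sum.cong) (use assms(2) in auto)
  finally show ?thesis .
qed

lemma XB_square_eq_0:
  assumes "av 2 < av (t ^ 2)" shows "XB av w0 q Delta beta (t ^ 2) = 0"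
proof -
  have "Xl av w0 q Delta (t ^ 2) l = 0" for l
  proof (cases "(2::'a) = 0")
    case False
    then obtain e where e: "av 2 = r ^ e"
      using vint_av_eq_power_r av_2_le_1 by blast
    with assms have "2 * T < e"
      unfolding av_t_square by (simp add: power_r_less_iff)
    then show ?thesis
      unfolding Xl_square[OF e] by simp
  qed (rule Xl_square_char_2)
  then show ?thesis
    unfolding XB_def by simp
qed

lemma XB_square_closed_form:
  assumes "av 2 = r ^ e" "e \<le> 2 * T" "0 < Re beta"
    and z: "z = (of_nat q :: complex) powr - beta" and w: "w = z * inverse (of_nat q)"
  shows "XB av w0 q Delta beta (t ^ 2) =
    of_real (r powi \<lfloor>real e / 2\<rfloor>) * (1 - (z * w) powi (int T + 1 - \<lceil>real e / 2\<rceil>)) / (1 - z * w)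
    + z * of_real (r powi \<lceil>real e / 2\<rceil>) * (1 - (z * w) powi (int T - \<lfloor>real e / 2\<rfloor>)) / (1 - z * w)"
proof -
  have zw: "z * w = z * z * of_real r"
    using w by (simp add: divide_inverse)
  then have "z * w \<noteq> 1"
    using norm_powr_square_div_less_1[OF q_gt_1 assms(3) z] by auto
  then show ?thesis
    unfolding XB_square[OF assms(1,2)] z[symmetric] by (rule sum_power_half_exponent[OF assms(2) zw])
qed

end

end

theorem proposition5p3:
  fixes av :: "'a::field \<Rightarrow> real" and w0 Delta t :: 'a and q T :: nat
    and beta z w :: complex
  assumes "nonarch_local_field av w0 q"
    and "residue_char_2 av"
    and "av Delta = av w0"
    and "0 < Re beta"
    and "z = (of_nat q :: complex) powr (- beta)"
    and "w = z * inverse (of_nat q :: complex)"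
    and "t \<in> vint av" and "t \<noteq> 0"
    and "av t = (1 / real q) ^ T"
  shows "XB av w0 q Delta beta (t ^ 2) =
    (if av (t ^ 2) \<le> av 2 then
       complex_of_real (av w0 powi \<lfloor>real_of_int (ord av q 2) / 2\<rfloor>)
         * (1 - (z * w) powi (int T + 1 - \<lceil>real_of_int (ord av q 2) / 2\<rceil>)) / (1 - z * w)
       + z * complex_of_real (av w0 powi \<lceil>real_of_int (ord av q 2) / 2\<rceil>)
         * (1 - (z * w) powi (int T - \<lfloor>real_of_int (ord av q 2) / 2\<rfloor>)) / (1 - z * w)
     else 0)"
proof -
  interpret local_field av w0 q
    by unfold_locales (fact assms(1))
  have Delta: "av Delta = r" and t: "av t = r ^ T"
    using assms(3,9) by simp_all
  show ?thesis
  proof (cases "av (t ^ 2) \<le> av 2")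
    case True
    then have "2 \<noteq> (0::'a)"
      using av_t_square[OF Delta t] power_r_pos[of "2 * T"] by auto
    then obtain e where e: "av 2 = r ^ e"
      using vint_av_eq_power_r av_2_le_1 by blast
    have "e \<le> 2 * T"
      using True unfolding av_t_square[OF Delta t] e power_r_le_iff .
    from XB_square_closed_form[OF Delta t e this assms(4-6)] show ?thesis
      unfolding ord_eq[OF e] of_int_of_nat_eq av_w0 if_P[OF True] .
  next
    case False
    then show ?thesis
      using XB_square_eq_0[OF Delta t] by simp
  qed
qed

end
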